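(* Let $\beta=0$ and $p>1$. Then for $c^2<1$, $$d(0,c)=(1-c^2)^{\frac{3p+5}{4(p-1)}}\,d(0,0).$$ Consequently: (i) if $p\ge9$, then $\partial_c^2 d(0,c)<0$ for all $c^2<1$; (ii) if $p<9$, then $\partial_c^2d(0,c)<0$ for $c^2<\frac{2(p-1)}{p+7}$ and $\partial_c^2d(0,c)>0$ for $\frac{2(p-1)}{p+7}<c^2<1$.
   Context: Setting: $f\in C^2$ homogeneous of degree $p$ (i.e. $f(\lambda s)=\lambda^pf(s)$ for $\lambda>0$), and $F=\int_0^sf$, taking a positive value somewhere. Definitions: - $I(u)=\int u_{xx}^2-\beta u_x^2+(1-c^2)u^2$ and $K(u)=(p+1)\int F(u)$. - $m(\beta,c)=\inf\{I/K^{2/(p+1)}:u\in H^2,K(u)>0\}$. - $d(\beta,c)=\frac{p-1}{2(p+1)}m(\beta,c)^{(p+1)/(p-1)}$ (which is positive). *)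

theory Defs
  imports "HOL-Analysis.Analysis"
begin

definition C2_fun :: "(real \<Rightarrow> real) \<Rightarrow> bool" where
  "C2_fun f \<longleftrightarrow> (\<exists>f1 f2. (\<forall>x. (f has_real_derivative f1 x) (at x)) \<and>
      (\<forall>x. (f1 has_real_derivative f2 x) (at x)) \<and> continuous_on UNIV f2)"

definition homogeneous_of_degree :: "real \<Rightarrow> (real \<Rightarrow> real) \<Rightarrow> bool" where
  "homogeneous_of_degree p f \<longleftrightarrow> (\<forall>l>0. \<forall>s. f (l * s) = l powr p * f s)"

definition prim :: "(real \<Rightarrow> real) \<Rightarrow> real \<Rightarrow> real" where
  "prim f s = interval_lebesgue_integral lborel (ereal 0) (ereal s) f"

text \<open>H^2(R), via representatives: u is differentiable with derivative v,
  v(x) = v(0) + int_0^x w (so w is the weak second derivative), and u, v, w in L^2.\<close>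
definition H2_triple :: "(real \<Rightarrow> real) \<Rightarrow> (real \<Rightarrow> real) \<Rightarrow> (real \<Rightarrow> real) \<Rightarrow> bool" where
  "H2_triple u v w \<longleftrightarrow>
     (\<forall>x. (u has_real_derivative v x) (at x)) \<and>
     w \<in> borel_measurable lborel \<and>
     (\<forall>x. v x = v 0 + interval_lebesgue_integral lborel (ereal 0) (ereal x) w) \<and>
     integrable lborel (\<lambda>x. (u x)\<^sup>2) \<and> integrable lborel (\<lambda>x. (v x)\<^sup>2) \<and>
     integrable lborel (\<lambda>x. (w x)\<^sup>2)"

definition I_fun :: "real \<Rightarrow> real \<Rightarrow> (real \<Rightarrow> real) \<Rightarrow> (real \<Rightarrow> real) \<Rightarrow> (real \<Rightarrow> real) \<Rightarrow> real" where
  "I_fun beta c u v w = (LINT x|lborel. (w x)\<^sup>2 - beta * (v x)\<^sup>2 + (1 - c\<^sup>2) * (u x)\<^sup>2)"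

definition K_fun :: "real \<Rightarrow> (real \<Rightarrow> real) \<Rightarrow> (real \<Rightarrow> real) \<Rightarrow> real" where
  "K_fun p f u = (p + 1) * (LINT x|lborel. prim f (u x))"

definition m_fun :: "real \<Rightarrow> (real \<Rightarrow> real) \<Rightarrow> real \<Rightarrow> real \<Rightarrow> real" where
  "m_fun p f beta c = Inf {I_fun beta c u v w / (K_fun p f u) powr (2 / (p + 1)) | u v w.
       H2_triple u v w \<and> K_fun p f u > 0}"

definition d_fun :: "real \<Rightarrow> (real \<Rightarrow> real) \<Rightarrow> real \<Rightarrow> real \<Rightarrow> real" where
  "d_fun p f beta c = (p - 1) / (2 * (p + 1)) * (m_fun p f beta c) powr ((p + 1) / (p - 1))"

end

(*
  For beta = 0 the dilation u(x) |-> u(s x) multiplies the integral of u_xx^2 by s^3 and both the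
  integral of u^2 and K(u) by 1/s. With s = (1 - c^2)^(1/4) it therefore maps the Rayleigh
  quotients for c = 0 bijectively onto those for c, scaled by (1 - c^2)^((3 + 2/(p+1))/4). Hence
  m(0,c) and d(0,c) are explicit powers of 1 - c^2 times their values at c = 0, and the sign of
  the second derivative is read off the closed formula. That m(0,0) > 0 follows from the
  one-dimensional Sobolev bound sup u^2 <= 27 I(u) together with F(s) <= C |s|^(p+1).
*)
theory Submission
  imports Defs "HOL-Probability.Distributions"
begin

section \<open>Primitives of homogeneous functions\<close>

lemma has_real_derivative_prim:
  assumes "continuous_on UNIV f"
  shows "(prim f has_real_derivative f x) (at x)"
proof -
  let ?a = "min 0 x - 1" and ?b = "max 0 x + 1"
  have "continuous_on {?a..?b} f" using continuous_on_subset[OF assms] by blast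
  then have "((\<lambda>u. interval_lebesgue_integral lborel (ereal 0) (ereal u) f) has_vector_derivative f x)
      (at x within {?a..?b})"
    by (rule interval_integral_FTC2[rotated 2]) auto
  then have "((\<lambda>u. interval_lebesgue_integral lborel (ereal 0) (ereal u) f) has_vector_derivative f x) (at x)"
    by (subst (asm) at_within_interior[of x]) auto
  then show ?thesis
    unfolding prim_def has_real_derivative_iff_has_vector_derivative .
qed

lemma prim_0 [simp]: "prim f 0 = 0"
  unfolding prim_def by simp

lemma C2_fun_continuous: "C2_fun f \<Longrightarrow> continuous_on UNIV f"
  unfolding C2_fun_def by (metis DERIV_isCont continuous_at_imp_continuous_on)

lemma prim_homogeneous:
  assumes "continuous_on UNIV f" "homogeneous_of_degree p f" "l > 0"
  shows "prim f (l * s) = l powr (p + 1) * prim f s"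
proof -
  let ?g = "\<lambda>s. prim f (l * s) - l powr (p + 1) * prim f s"
  have "\<forall>x. DERIV ?g x :> 0"
  proof
    fix x
    have "DERIV ?g x :> f (l * x) * l - l powr (p + 1) * f x"
      by (intro DERIV_diff DERIV_cmult has_real_derivative_prim[OF assms(1)]
            DERIV_chain2[OF has_real_derivative_prim[OF assms(1)]])
         (auto intro!: derivative_eq_intros)
    moreover have "f (l * x) * l = l powr (p + 1) * f x"
      using assms(2,3) unfolding homogeneous_of_degree_def by (simp add: powr_add)
    ultimately show "DERIV ?g x :> 0" by simp
  qed
  then have "?g s = ?g 0" by (rule DERIV_isconst_all)
  then show ?thesis by simp
qed

lemma prim_le_abs_powr:
  assumes "continuous_on UNIV f" "homogeneous_of_degree p f"
  shows "prim f s \<le> max (prim f 1) (prim f (-1)) * \<bar>s\<bar> powr (p + 1)"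
proof (cases "s \<ge> 0")
  case True
  then show ?thesis
    using prim_homogeneous[OF assms, of s 1]
    by (cases "s = 0") (auto simp: mult.commute intro!: mult_right_mono)
next
  case False
  then show ?thesis
    using prim_homogeneous[OF assms, of "-s" "-1"] by (auto simp: mult.commute intro!: mult_right_mono)
qed

lemma max_prim_pos:
  assumes "continuous_on UNIV f" "homogeneous_of_degree p f" "prim f s > 0"
  shows "max (prim f 1) (prim f (-1)) > 0"
  using prim_le_abs_powr[OF assms(1,2), of s] assms(3)
  by (smt (verit) mult_nonpos_nonneg powr_ge_zero)

section \<open>A one-dimensional Sobolev bound\<close>

lemma set_integrable_Icc_if_square_integrable:
  fixes w :: "real \<Rightarrow> real"
  assumes "w \<in> borel_measurable lborel" "integrable lborel (\<lambda>x. (w x)\<^sup>2)"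
  shows "set_integrable lborel {a..b} w"
  unfolding set_integrable_def
proof (rule Bochner_Integration.integrable_bound)
  show "integrable lborel (\<lambda>x. indicat_real {a..b} x + (w x)\<^sup>2)"
    using assms(2) by (simp add: integrable_indicator_iff emeasure_lborel_Icc_eq)
  show "(\<lambda>x. indicat_real {a..b} x *\<^sub>R w x) \<in> borel_measurable lborel"
    using assms(1) by measurable
  have "\<bar>w x\<bar> \<le> 1 + (w x)\<^sup>2" for x
    using zero_le_power2[of "\<bar>w x\<bar> - 1"] unfolding power2_diff power2_abs by simp
  then show "AE x in lborel. norm (indicat_real {a..b} x *\<^sub>R w x) \<le> norm (indicat_real {a..b} x + (w x)\<^sup>2)"
    by (auto simp: indicator_def)
qed

lemma H2_triple_derivative_diff:
  assumes H: "H2_triple u v w" and "x \<le> y"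
  shows "v y - v x = (LINT t|lborel. indicat_real {x..y} t * w t)"
proof -
  have vv: "\<And>x. v x = v 0 + interval_lebesgue_integral lborel (ereal 0) (ereal x) w"
    using H unfolding H2_triple_def by blast
  let ?lo = "min 0 (min x y)" and ?hi = "max 0 (max x y)"
  have "set_integrable lborel {?lo..?hi} w"
    using H unfolding H2_triple_def by (blast intro: set_integrable_Icc_if_square_integrable)
  then have "interval_lebesgue_integrable lborel
      (min (ereal 0) (min (ereal x) (ereal y))) (max (ereal 0) (max (ereal x) (ereal y))) w"
    unfolding interval_lebesgue_integrable_def
    by (auto simp: min_le_iff_disj le_max_iff_disj einterval_iff min_def max_def
             elim!: set_integrable_subset)
  from interval_integral_sum[OF this]
  have "v y - v x = interval_lebesgue_integral lborel (ereal x) (ereal y) w"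
    using vv[of x] vv[of y] by simp
  then show ?thesis
    using \<open>x \<le> y\<close> by (simp add: interval_integral_Icc set_lebesgue_integral_def)
qed

lemma le_sqrt_if_AM_GM_bounds:
  fixes A J :: real
  assumes "J \<ge> 0" and bound: "\<And>e. e > 0 \<Longrightarrow> A \<le> e / 2 + J / (2 * e)"
  shows "A \<le> sqrt J"
proof (cases "J = 0")
  case True
  then show ?thesis using bound[of A] by fastforce
next
  case False
  then have "J > 0" using assms(1) by simp
  then have "J / (2 * sqrt J) = sqrt J / 2"
    by (metis real_div_sqrt times_divide_eq_right divide_divide_eq_left mult.commute less_eq_real_def)
  then show ?thesis using bound[of "sqrt J"] \<open>J > 0\<close> by simp
qed

lemma H2_triple_derivative_oscillation:
  assumes H: "H2_triple u v w" and "x \<le> y" "y - x \<le> 1"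
  shows "\<bar>v y - v x\<bar> \<le> sqrt (LINT t|lborel. (w t)\<^sup>2)"
proof (rule le_sqrt_if_AM_GM_bounds)
  let ?J = "LINT t|lborel. (w t)\<^sup>2"
  have wm: "w \<in> borel_measurable lborel" and wi: "integrable lborel (\<lambda>x. (w x)\<^sup>2)"
    using H unfolding H2_triple_def by blast+
  show "0 \<le> ?J" by simp
  fix e :: real assume e: "e > 0"
  have "integrable lborel (\<lambda>t. indicat_real {x..y} t * w t)"
    using set_integrable_Icc_if_square_integrable[OF wm wi, of x y] unfolding set_integrable_def by simp
  moreover have "\<bar>w t\<bar> \<le> e / 2 + (w t)\<^sup>2 / (2 * e)" for t
  proof -
    have "2 * e * \<bar>w t\<bar> \<le> e\<^sup>2 + (w t)\<^sup>2"
      using zero_le_power2[of "e - \<bar>w t\<bar>"] unfolding power2_diff power2_abs by simp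
    then show ?thesis using e by (simp add: field_simps power2_eq_square)
  qed
  moreover have "integrable lborel (indicat_real {x..y})"
    by (simp add: integrable_indicator_iff emeasure_lborel_Icc_eq)
  moreover have "\<bar>indicat_real {x..y} t * w t\<bar> \<le> indicat_real {x..y} t * (e / 2) + (w t)\<^sup>2 / (2 * e)"
    if "\<bar>w t\<bar> \<le> e / 2 + (w t)\<^sup>2 / (2 * e)" for t
    using that e by (auto simp: indicator_def)
  ultimately have "\<bar>v y - v x\<bar> \<le> (LINT t|lborel. indicat_real {x..y} t * (e / 2) + (w t)\<^sup>2 / (2 * e))"
    unfolding H2_triple_derivative_diff[OF H \<open>x \<le> y\<close>]
    by (intro integral_abs_bound_integral Bochner_Integration.integrable_add integrable_divide wi
          integrable_mult_left) auto
  also have "\<dots> = (y - x) * (e / 2) + ?J / (2 * e)"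
    using \<open>x \<le> y\<close> wi by (simp add: integrable_indicator_iff emeasure_lborel_Icc_eq)
  also have "\<dots> \<le> e / 2 + ?J / (2 * e)"
    using assms e by simp
  finally show "\<bar>v y - v x\<bar> \<le> e / 2 + ?J / (2 * e)" .
qed

lemma H2_triple_taylor_bound:
  assumes H: "H2_triple u v w" and "0 \<le> t" "t \<le> 1"
  shows "\<bar>u (x + t) - u x - t * v x\<bar> \<le> t * sqrt (LINT t|lborel. (w t)\<^sup>2)"
proof (cases "t = 0")
  case False
  then have "t > 0" using assms by simp
  moreover have "\<And>z. DERIV u z :> v z" using H unfolding H2_triple_def by blast
  ultimately obtain z where z: "x < z" "z < x + t" "u (x + t) - u x = t * v z"
    using MVT2[of x "x + t" u v] by auto
  then have "\<bar>v z - v x\<bar> \<le> sqrt (LINT t|lborel. (w t)\<^sup>2)"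
    using H2_triple_derivative_oscillation[OF H] assms by simp
  then show ?thesis
    using z(3) \<open>t > 0\<close> by (simp add: abs_mult right_diff_distrib[symmetric])
qed simp

lemma square_le_three_sum_squares:
  fixes A a b c :: real
  assumes "\<bar>A\<bar> \<le> a + b + c" "0 \<le> a" "0 \<le> b" "0 \<le> c"
  shows "A\<^sup>2 \<le> 3 * (a\<^sup>2 + b\<^sup>2 + c\<^sup>2)"
proof -
  have "A\<^sup>2 \<le> (a + b + c)\<^sup>2"
    using assms by (metis abs_ge_zero power2_abs power_mono)
  also have "\<dots> \<le> 3 * (a\<^sup>2 + b\<^sup>2 + c\<^sup>2)"
    using sum_squares_ge_zero[of "a - b" "b - c"]
    by (smt (verit) power2_diff power2_sum zero_le_power2 mult_2)
  finally show ?thesis .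
qed

text \<open>Eliminating \<open>v x\<close> between the Taylor bounds at \<open>x + t/2\<close> and \<open>x + t\<close>.\<close>
lemma H2_triple_square_bound_two_points:
  assumes H: "H2_triple u v w" and t: "0 \<le> t" "t \<le> 1"
  shows "(u x)\<^sup>2 \<le> 12 * (u (x + 1/2 * t))\<^sup>2 + 3 * (u (x + t))\<^sup>2 + 12 * (LINT t|lborel. (w t)\<^sup>2)"
proof -
  let ?S = "sqrt (LINT t|lborel. (w t)\<^sup>2)"
  have "\<bar>u (x + t/2) - u x - t/2 * v x\<bar> \<le> t/2 * ?S"
    using H2_triple_taylor_bound[OF H, of "t/2" x] t by simp
  moreover have "\<bar>u (x + t) - u x - t * v x\<bar> \<le> t * ?S"
    using H2_triple_taylor_bound[OF H t] .
  moreover have "t * ?S \<le> ?S" using t by (simp add: mult_left_le_one_le)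
  ultimately have "\<bar>u x\<bar> \<le> 2 * \<bar>u (x + 1/2 * t)\<bar> + \<bar>u (x + t)\<bar> + 2 * ?S"
    using abs_ge_self[of "u (x + t/2)"] abs_ge_minus_self[of "u (x + t/2)"]
      abs_ge_self[of "u (x + t)"] abs_ge_minus_self[of "u (x + t)"]
    unfolding abs_le_iff by simp
  from square_le_three_sum_squares[OF this] show ?thesis
    by (simp add: power_mult_distrib)
qed

lemma H2_triple_sup_bound:
  assumes H: "H2_triple u v w"
  shows "(u x)\<^sup>2 \<le> 27 * ((LINT t|lborel. (w t)\<^sup>2) + (LINT t|lborel. (u t)\<^sup>2))"
proof -
  let ?J = "LINT t|lborel. (w t)\<^sup>2" and ?U = "LINT t|lborel. (u t)\<^sup>2"
  have ui: "integrable lborel (\<lambda>t. (u t)\<^sup>2)" using H unfolding H2_triple_def by blast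
  have i1: "integrable lborel (\<lambda>t. (u (x + 1/2 * t))\<^sup>2)"
    using lborel_integrable_real_affine[OF ui, of "1/2" x] by simp
  have i2: "integrable lborel (\<lambda>t. (u (x + 1 * t))\<^sup>2)"
    using lborel_integrable_real_affine[OF ui, of 1 x] by simp
  have ind: "integrable lborel (indicat_real {0..1::real})"
    by (simp add: integrable_indicator_iff emeasure_lborel_Icc_eq)
  have "(u x)\<^sup>2 = (LINT t|lborel. indicat_real {0..1::real} t * (u x)\<^sup>2)"
    by simp
  also have "\<dots> \<le> (LINT t|lborel. 12 * (u (x + 1/2 * t))\<^sup>2 + 3 * (u (x + 1 * t))\<^sup>2
      + indicat_real {0..1::real} t * (12 * ?J))"
    using H2_triple_square_bound_two_points[OF H]
    by (intro integral_mono Bochner_Integration.integrable_add integrable_mult_right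
          integrable_mult_left i1 i2 ind)
       (auto simp: indicator_def)
  also have "\<dots> = 27 * ?U + 12 * ?J"
    using i1 i2 ind lborel_integral_real_affine[of "1/2" "\<lambda>t. (u t)\<^sup>2" x]
      lborel_integral_real_affine[of 1 "\<lambda>t. (u t)\<^sup>2" x]
    by (simp add: Bochner_Integration.integral_add integrable_mult_left)
  also have "\<dots> \<le> 27 * (?J + ?U)"
    using integral_nonneg_AE[of "\<lambda>t. (w t)\<^sup>2" lborel] by simp
  finally show ?thesis .
qed

section \<open>Rayleigh quotients for \<open>\<beta> = 0\<close>\<close>

lemma I_fun_zero_beta:
  assumes "H2_triple u v w"
  shows "I_fun 0 c u v w = (LINT t|lborel. (w t)\<^sup>2) + (1 - c\<^sup>2) * (LINT t|lborel. (u t)\<^sup>2)"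
proof -
  have "integrable lborel (\<lambda>t. (u t)\<^sup>2)" "integrable lborel (\<lambda>t. (w t)\<^sup>2)"
    using assms unfolding H2_triple_def by blast+
  then show ?thesis unfolding I_fun_def by simp
qed

lemma abs_powr_le_square_mult:
  fixes y B p :: real
  assumes "y\<^sup>2 \<le> B" "p > 1"
  shows "\<bar>y\<bar> powr (p + 1) \<le> B powr ((p - 1) / 2) * y\<^sup>2"
proof (cases "y = 0")
  case False
  have "p + 1 = 2 * ((p - 1) / 2) + 2"
    by (simp add: field_simps)
  then have "\<bar>y\<bar> powr (p + 1) = \<bar>y\<bar> powr (2 * ((p - 1) / 2) + 2)"
    by (rule arg_cong)
  also have "\<dots> = (y\<^sup>2) powr ((p - 1) / 2) * y\<^sup>2"
    unfolding powr_add powr_powr[symmetric] using False by (simp add: powr_numeral)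
  also have "\<dots> \<le> B powr ((p - 1) / 2) * y\<^sup>2"
    using assms by (intro mult_right_mono powr_mono2) auto
  finally show ?thesis .
qed (use assms in simp)

lemma K_fun_le_I_fun_powr:
  assumes fc: "continuous_on UNIV f" and h: "homogeneous_of_degree p f" and ex: "\<exists>s. prim f s > 0"
    and p: "p > 1" and H: "H2_triple u v w" and K: "K_fun p f u > 0"
  shows "K_fun p f u
    \<le> (p + 1) * max (prim f 1) (prim f (-1)) * 27 powr ((p - 1) / 2) * I_fun 0 0 u v w powr ((p + 1) / 2)"
proof -
  define M where "M = max (prim f 1) (prim f (-1))"
  define I where "I = I_fun 0 0 u v w"
  let ?J = "LINT t|lborel. (w t)\<^sup>2" and ?U = "LINT t|lborel. (u t)\<^sup>2"
  have ui: "integrable lborel (\<lambda>t. (u t)\<^sup>2)" using H unfolding H2_triple_def by blast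
  have I: "I = ?J + ?U" unfolding I_def using I_fun_zero_beta[OF H, of 0] by simp
  have J: "?J \<ge> 0" and U: "?U \<ge> 0" by simp_all
  have I0: "I \<ge> 0" using I J U by simp
  have "integrable lborel (\<lambda>x. prim f (u x))"
    using K not_integrable_integral_eq unfolding K_fun_def by fastforce
  moreover have "M \<ge> 0"
    unfolding M_def using max_prim_pos[OF fc h] ex by (meson less_imp_le)
  have "prim f (u x) \<le> M * (27 * I) powr ((p - 1) / 2) * (u x)\<^sup>2" for x
  proof -
    have "prim f (u x) \<le> M * \<bar>u x\<bar> powr (p + 1)"
      unfolding M_def by (rule prim_le_abs_powr[OF fc h])
    also have "\<dots> \<le> M * ((27 * I) powr ((p - 1) / 2) * (u x)\<^sup>2)"
      using abs_powr_le_square_mult[OF _ p] H2_triple_sup_bound[OF H, of x] I \<open>M \<ge> 0\<close>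
      by (intro mult_left_mono) auto
    finally show ?thesis by simp
  qed
  ultimately have "(LINT x|lborel. prim f (u x)) \<le> M * (27 * I) powr ((p - 1) / 2) * ?U"
    using ui by (subst integral_mult_right_zero[symmetric]) (intro integral_mono; simp)
  also have "\<dots> \<le> M * (27 * I) powr ((p - 1) / 2) * I"
    using \<open>M \<ge> 0\<close> I J by (intro mult_left_mono) auto
  also have "\<dots> = M * 27 powr ((p - 1) / 2) * I powr ((p + 1) / 2)"
  proof -
    have "I powr ((p + 1) / 2) = I powr ((p - 1) / 2) * I"
    proof (cases "I = 0")
      case False
      have "(p + 1) / 2 = (p - 1) / 2 + 1" by (simp add: field_simps)
      then have "I powr ((p + 1) / 2) = I powr ((p - 1) / 2) * I powr 1"
        by (simp only: powr_add)
      then show ?thesis using False I0 by simp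
    qed simp
    then show ?thesis
      using I0 by (simp add: powr_mult)
  qed
  finally show ?thesis
    unfolding K_fun_def M_def I_def using p by (simp add: mult.assoc mult_left_mono)
qed

definition rayleigh_quotients :: "real \<Rightarrow> (real \<Rightarrow> real) \<Rightarrow> real \<Rightarrow> real set" where
  "rayleigh_quotients p f c = {I_fun 0 c u v w / (K_fun p f u) powr (2 / (p + 1)) | u v w.
       H2_triple u v w \<and> K_fun p f u > 0}"

lemma m_fun_zero_beta: "m_fun p f 0 c = Inf (rayleigh_quotients p f c)"
  unfolding m_fun_def rayleigh_quotients_def ..

lemma rayleigh_quotients_zero_lower_bound:
  assumes fc: "continuous_on UNIV f" and h: "homogeneous_of_degree p f" and ex: "\<exists>s. prim f s > 0"
    and p: "p > 1" and r: "r \<in> rayleigh_quotients p f 0"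
  shows "1 / ((p + 1) * max (prim f 1) (prim f (-1)) * 27 powr ((p - 1) / 2)) powr (2 / (p + 1)) \<le> r"
proof -
  define C where "C = (p + 1) * max (prim f 1) (prim f (-1)) * 27 powr ((p - 1) / 2)"
  obtain u v w where H: "H2_triple u v w" and K: "K_fun p f u > 0"
    and r: "r = I_fun 0 0 u v w / (K_fun p f u) powr (2 / (p + 1))"
    using r unfolding rayleigh_quotients_def by blast
  define I where "I = I_fun 0 0 u v w"
  have "C > 0" unfolding C_def using max_prim_pos[OF fc h] ex p by fastforce
  have KC: "K_fun p f u \<le> C * I powr ((p + 1) / 2)"
    unfolding C_def I_def by (rule K_fun_le_I_fun_powr[OF fc h ex p H K])
  moreover have "I \<ge> 0" unfolding I_def I_fun_zero_beta[OF H] by simp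
  ultimately have "I > 0" using K by (cases "I = 0") auto
  have "K_fun p f u powr (2 / (p + 1)) \<le> (C * I powr ((p + 1) / 2)) powr (2 / (p + 1))"
    using KC K p by (intro powr_mono2) auto
  also have "\<dots> = C powr (2 / (p + 1)) * I"
  proof -
    have "(p + 1) / 2 * (2 / (p + 1)) = 1" using p by simp
    then show ?thesis
      using \<open>C > 0\<close> \<open>I > 0\<close> by (simp only: powr_mult powr_powr powr_one less_imp_le powr_ge_zero)
  qed
  finally have "K_fun p f u powr (2 / (p + 1)) \<le> C powr (2 / (p + 1)) * I" .
  then show ?thesis
    unfolding r I_def[symmetric] C_def[symmetric] using K \<open>C > 0\<close> \<open>I > 0\<close>
    by (simp add: field_simps)
qed

section \<open>Dilations\<close>

lemma lborel_integral_dilate: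
  fixes g :: "real \<Rightarrow> real"
  assumes "s > 0"
  shows "(LINT x|lborel. g (s * x)) = (LINT x|lborel. g x) / s"
  using lborel_integral_real_affine[of s g 0] assms by simp

lemma lborel_integrable_dilate:
  fixes g :: "real \<Rightarrow> real"
  assumes "s > 0" "integrable lborel g"
  shows "integrable lborel (\<lambda>x. g (s * x))"
  using lborel_integrable_real_affine[OF assms(2), of s 0] assms(1) by simp

lemma interval_integral_Icc_dilate:
  fixes g :: "real \<Rightarrow> real"
  assumes s: "s > 0" and "a \<le> b"
  shows "interval_lebesgue_integral lborel (ereal (s * a)) (ereal (s * b)) g
       = s * interval_lebesgue_integral lborel (ereal a) (ereal b) (\<lambda>t. g (s * t))"
proof -
  have "indicat_real {s * a..s * b} (s * t) = indicat_real {a..b} t" for t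
    using s by (simp add: indicator_def)
  then have "(LINT t|lborel. indicat_real {s * a..s * b} t * g t)
      = s * (LINT t|lborel. indicat_real {a..b} t * g (s * t))"
    using lborel_integral_real_affine[of s "\<lambda>t. indicat_real {s * a..s * b} t * g t" 0] s by simp
  then show ?thesis
    using assms by (simp add: interval_integral_Icc set_lebesgue_integral_def)
qed

lemma interval_integral_dilate:
  fixes g :: "real \<Rightarrow> real"
  assumes s: "s > 0"
  shows "interval_lebesgue_integral lborel (ereal 0) (ereal (s * x)) g
       = s * interval_lebesgue_integral lborel (ereal 0) (ereal x) (\<lambda>t. g (s * t))"
proof (cases "0 \<le> x")
  case True
  then show ?thesis using interval_integral_Icc_dilate[OF s True, of g] by simp
next
  case False
  then show ?thesis
    using interval_integral_Icc_dilate[OF s, of x 0 g]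
      interval_integral_endpoints_reverse[of "ereal 0" "ereal (s * x)" g]
      interval_integral_endpoints_reverse[of "ereal 0" "ereal x" "\<lambda>t. g (s * t)"]
    by simp
qed

lemma H2_triple_dilate:
  assumes H: "H2_triple u v w" and s: "s > 0"
  shows "H2_triple (\<lambda>x. u (s * x)) (\<lambda>x. s * v (s * x)) (\<lambda>x. s\<^sup>2 * w (s * x))"
proof -
  have du: "\<And>x. DERIV u x :> v x" and wm: "w \<in> borel_measurable lborel"
    and vv: "\<And>x. v x = v 0 + interval_lebesgue_integral lborel (ereal 0) (ereal x) w"
    and ui: "integrable lborel (\<lambda>x. (u x)\<^sup>2)" and vi: "integrable lborel (\<lambda>x. (v x)\<^sup>2)"
    and wi: "integrable lborel (\<lambda>x. (w x)\<^sup>2)"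
    using H unfolding H2_triple_def by blast+
  have "DERIV (\<lambda>x. u (s * x)) x :> s * v (s * x)" for x
    using DERIV_chain2[OF du DERIV_cmult_Id[of s x]] by (simp add: mult.commute)
  moreover have "(\<lambda>x. s\<^sup>2 * w (s * x)) \<in> borel_measurable lborel"
    using wm by measurable
  moreover have "s * v (s * x) = s * v (s * 0)
      + interval_lebesgue_integral lborel (ereal 0) (ereal x) (\<lambda>x. s\<^sup>2 * w (s * x))" for x
    using vv[of "s * x"] interval_integral_dilate[OF s, where g=w and x=x]
    by (simp add: algebra_simps power2_eq_square)
  moreover have "integrable lborel (\<lambda>x. (u (s * x))\<^sup>2)"
    "integrable lborel (\<lambda>x. (s * v (s * x))\<^sup>2)" "integrable lborel (\<lambda>x. (s\<^sup>2 * w (s * x))\<^sup>2)"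
    using lborel_integrable_dilate[OF s ui] lborel_integrable_dilate[OF s vi]
      lborel_integrable_dilate[OF s wi]
    by (simp_all add: power_mult_distrib)
  ultimately show ?thesis
    unfolding H2_triple_def by blast
qed

lemma K_fun_dilate:
  assumes "s > 0"
  shows "K_fun p f (\<lambda>x. u (s * x)) = K_fun p f u / s"
  unfolding K_fun_def using lborel_integral_dilate[OF assms, of "\<lambda>y. prim f (u y)"] by simp

lemma I_fun_zero_beta_dilate:
  assumes H: "H2_triple u v w" and s: "s > 0"
  shows "I_fun 0 c (\<lambda>x. u (s * x)) (\<lambda>x. s * v (s * x)) (\<lambda>x. s\<^sup>2 * w (s * x))
    = (s ^ 4 * (LINT t|lborel. (w t)\<^sup>2) + (1 - c\<^sup>2) * (LINT t|lborel. (u t)\<^sup>2)) / s"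
proof -
  have "(LINT t|lborel. (s\<^sup>2 * w (s * t))\<^sup>2) = s ^ 4 * (LINT t|lborel. (w (s * t))\<^sup>2)"
    by (simp add: power_mult_distrib flip: power_mult)
  then show ?thesis
    unfolding I_fun_zero_beta[OF H2_triple_dilate[OF H s]]
    using lborel_integral_dilate[OF s, of "\<lambda>t. (w t)\<^sup>2"] lborel_integral_dilate[OF s, of "\<lambda>t. (u t)\<^sup>2"]
    by (simp add: add_divide_distrib)
qed

lemma rayleigh_quotient_dilate:
  assumes H: "H2_triple u v w" and s: "s > 0" and K: "K_fun p f u > 0"
  shows "I_fun 0 c (\<lambda>x. u (s * x)) (\<lambda>x. s * v (s * x)) (\<lambda>x. s\<^sup>2 * w (s * x))
      / K_fun p f (\<lambda>x. u (s * x)) powr q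
    = s powr (q - 1) * (s ^ 4 * (LINT t|lborel. (w t)\<^sup>2) + (1 - c\<^sup>2) * (LINT t|lborel. (u t)\<^sup>2))
      / K_fun p f u powr q"
  unfolding I_fun_zero_beta_dilate[OF H s] K_fun_dilate[OF s]
  using s K by (simp add: powr_divide powr_diff field_simps)

lemma rayleigh_quotients_dilate:
  assumes c: "c\<^sup>2 < 1"
  shows "rayleigh_quotients p f c
    = (\<lambda>r. (1 - c\<^sup>2) powr ((3 + 2 / (p + 1)) / 4) * r) ` rayleigh_quotients p f 0"
proof -
  define a where "a = 1 - c\<^sup>2"
  define q where "q = 2 / (p + 1)"
  have a: "a > 0" using c unfolding a_def by simp
  have dilate_mem: "I_fun 0 c' (\<lambda>x. u (s * x)) (\<lambda>x. s * v (s * x)) (\<lambda>x. s\<^sup>2 * w (s * x))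
      / K_fun p f (\<lambda>x. u (s * x)) powr q \<in> rayleigh_quotients p f c'"
    if "H2_triple u v w" "K_fun p f u > 0" "s > 0" for u v w s c'
    using H2_triple_dilate[OF that(1,3)] K_fun_dilate[OF that(3), of p f u] that(2,3)
    unfolding rayleigh_quotients_def q_def by fastforce
  have root: "(a powr e) ^ 4 = a powr (4 * e)" "(a powr e) powr (q - 1) = a powr (e * (q - 1))" for e
    using a by (simp_all add: powr_powr mult.commute flip: powr_realpow)
  have shift: "a powr ((3 + q) / 4) = a powr ((q - 1) / 4) * a"
  proof -
    have "(3 + q) / 4 = (q - 1) / 4 + 1" by (simp add: field_simps)
    then have "a powr ((3 + q) / 4) = a powr ((q - 1) / 4) * a powr 1"
      unfolding powr_add[symmetric] by (rule arg_cong)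
    then show ?thesis using a by simp
  qed
  show ?thesis unfolding a_def[symmetric] q_def[symmetric]
  proof (intro equalityI subsetI)
    fix r assume "r \<in> rayleigh_quotients p f c"
    then obtain u v w where H: "H2_triple u v w" and K: "K_fun p f u > 0"
      and r: "r = I_fun 0 c u v w / (K_fun p f u) powr q"
      unfolding rayleigh_quotients_def q_def by blast
    define s where "s = a powr (-1/4)"
    have s: "s > 0" using a unfolding s_def by simp
    have "a powr ((3 + q) / 4) * (I_fun 0 0 (\<lambda>x. u (s * x)) (\<lambda>x. s * v (s * x))
        (\<lambda>x. s\<^sup>2 * w (s * x)) / K_fun p f (\<lambda>x. u (s * x)) powr q) = r"
      unfolding rayleigh_quotient_dilate[OF H s K]
      unfolding s_def r I_fun_zero_beta[OF H] root shift a_def[symmetric]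
      using a K by (simp add: powr_minus field_simps flip: powr_add)
    with dilate_mem[OF H K s] show "r \<in> (\<lambda>r. a powr ((3 + q) / 4) * r) ` rayleigh_quotients p f 0"
      by force
  next
    fix r' assume "r' \<in> (\<lambda>r. a powr ((3 + q) / 4) * r) ` rayleigh_quotients p f 0"
    then obtain u v w where H: "H2_triple u v w" and K: "K_fun p f u > 0"
      and r': "r' = a powr ((3 + q) / 4) * (I_fun 0 0 u v w / (K_fun p f u) powr q)"
      unfolding rayleigh_quotients_def q_def by blast
    define s where "s = a powr (1/4)"
    have s: "s > 0" using a unfolding s_def by simp
    have "I_fun 0 c (\<lambda>x. u (s * x)) (\<lambda>x. s * v (s * x)) (\<lambda>x. s\<^sup>2 * w (s * x))
        / K_fun p f (\<lambda>x. u (s * x)) powr q = r'"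
      unfolding rayleigh_quotient_dilate[OF H s K]
      unfolding s_def r' I_fun_zero_beta[OF H] root shift a_def[symmetric]
      using a by (simp add: field_simps)
    with dilate_mem[OF H K s] show "r' \<in> rayleigh_quotients p f c"
      by force
  qed
qed

section \<open>A Gaussian competitor\<close>

lemma exp_neg_square_eq_normal_density:
  fixes b :: real
  assumes "b > 0"
  shows "exp (- b * x\<^sup>2) = sqrt (pi / b) * normal_density 0 (1 / sqrt (2 * b)) x"
  using assms unfolding normal_density_def by (simp add: power_divide real_sqrt_divide field_simps)

lemma integrable_exp_neg_square_moment:
  fixes b :: real
  assumes "b > 0"
  shows "integrable lborel (\<lambda>x. exp (- b * x\<^sup>2) * x ^ k)"
proof -
  have "integrable lborel (\<lambda>x. normal_density 0 (1 / sqrt (2 * b)) x * (x - 0) ^ k)"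
    by (rule integrable_normal_moment) (use assms in simp)
  then have "integrable lborel (\<lambda>x. sqrt (pi / b) * (normal_density 0 (1 / sqrt (2 * b)) x * x ^ k))"
    by (intro integrable_mult_right) simp
  then show ?thesis
    unfolding exp_neg_square_eq_normal_density[OF assms] by (simp add: mult.assoc)
qed

lemma integral_exp_neg_square_pos:
  fixes b :: real
  assumes "b > 0"
  shows "(LINT x|lborel. exp (- b * x\<^sup>2)) > 0"
  unfolding exp_neg_square_eq_normal_density[OF assms] using assms by simp

lemma H2_triple_gaussian:
  "H2_triple (\<lambda>x. exp (- x\<^sup>2) * a) (\<lambda>x. -2 * x * exp (- x\<^sup>2) * a)
     (\<lambda>x. (4 * x\<^sup>2 - 2) * exp (- x\<^sup>2) * a)"
proof -
  define u where "u x = exp (- x\<^sup>2) * a" for x :: real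
  define v where "v x = -2 * x * exp (- x\<^sup>2) * a" for x :: real
  define w where "w x = (4 * x\<^sup>2 - 2) * exp (- x\<^sup>2) * a" for x :: real
  have dv: "DERIV v x :> w x" for x
    unfolding v_def w_def by (auto intro!: derivative_eq_intros simp: algebra_simps power2_eq_square)
  have wc: "continuous_on UNIV w" unfolding w_def by (intro continuous_intros)
  have "v x = v 0 + interval_lebesgue_integral lborel (ereal 0) (ereal x) w" for x
    using interval_integral_FTC_finite[of 0 x w v] continuous_on_subset[OF wc]
      has_field_derivative_at_within[OF dv]
    by (simp add: has_real_derivative_iff_has_vector_derivative)
  moreover have "DERIV u x :> v x" for x
    unfolding u_def v_def by (auto intro!: derivative_eq_intros simp: algebra_simps)
  moreover have "w \<in> borel_measurable lborel"
    using borel_measurable_continuous_onI[OF wc] by simp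
  moreover have "(u x)\<^sup>2 = a\<^sup>2 * (exp (- 2 * x\<^sup>2) * x ^ 0)"
    "(v x)\<^sup>2 = (4 * a\<^sup>2) * (exp (- 2 * x\<^sup>2) * x ^ 2)"
    "(w x)\<^sup>2 = (16 * a\<^sup>2) * (exp (- 2 * x\<^sup>2) * x ^ 4) - (16 * a\<^sup>2) * (exp (- 2 * x\<^sup>2) * x ^ 2)
       + (4 * a\<^sup>2) * (exp (- 2 * x\<^sup>2) * x ^ 0)" for x
    unfolding u_def v_def w_def
    by (simp_all add: power_mult_distrib power2_eq_square algebra_simps eval_nat_numeral
          flip: exp_add)
  then have "integrable lborel (\<lambda>x. (u x)\<^sup>2)" "integrable lborel (\<lambda>x. (v x)\<^sup>2)"
    "integrable lborel (\<lambda>x. (w x)\<^sup>2)"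
    using integrable_exp_neg_square_moment[of 2] integrable_exp_neg_square_moment[of 2 0]
    by (auto intro!: Bochner_Integration.integrable_add
        Bochner_Integration.integrable_diff integrable_mult_right)
  ultimately show ?thesis
    unfolding H2_triple_def u_def[abs_def] v_def[abs_def] w_def[abs_def] by blast
qed

lemma rayleigh_quotients_nonempty:
  assumes fc: "continuous_on UNIV f" and h: "homogeneous_of_degree p f" and s0: "prim f s0 > 0"
    and p: "p > 1"
  shows "rayleigh_quotients p f 0 \<noteq> {}"
proof -
  define u where "u x = exp (- x\<^sup>2) * s0" for x :: real
  have "prim f (u x) = prim f s0 * exp (- (p + 1) * x\<^sup>2)" for x
    unfolding u_def using prim_homogeneous[OF fc h, of "exp (- x\<^sup>2)" s0]
    by (simp add: powr_def algebra_simps)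
  then have "K_fun p f u = (p + 1) * (prim f s0 * (LINT x|lborel. exp (- (p + 1) * x\<^sup>2)))"
    unfolding K_fun_def by simp
  moreover have "(LINT x|lborel. exp (- (p + 1) * x\<^sup>2)) > 0"
    using integral_exp_neg_square_pos[of "p + 1"] p by simp
  ultimately have "K_fun p f u > 0" using p s0 by simp
  then show ?thesis
    using H2_triple_gaussian[of s0] unfolding rayleigh_quotients_def u_def[abs_def] by blast
qed

section \<open>The ground state energy\<close>

lemma rayleigh_quotients_zero_bdd_below:
  assumes "continuous_on UNIV f" "homogeneous_of_degree p f" "\<exists>s. prim f s > 0" "p > 1"
  shows "bdd_below (rayleigh_quotients p f 0)"
  using rayleigh_quotients_zero_lower_bound[OF assms] unfolding bdd_below_def by blast

lemma m_fun_zero_pos: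
  assumes fc: "continuous_on UNIV f" and h: "homogeneous_of_degree p f" and ex: "\<exists>s. prim f s > 0"
    and p: "p > 1"
  shows "m_fun p f 0 0 > 0"
proof -
  have "0 < 1 / ((p + 1) * max (prim f 1) (prim f (-1)) * 27 powr ((p - 1) / 2)) powr (2 / (p + 1))"
    using max_prim_pos[OF fc h] ex p by fastforce
  also have "\<dots> \<le> m_fun p f 0 0"
    unfolding m_fun_zero_beta using rayleigh_quotients_nonempty[OF fc h _ p] ex
    by (intro cInf_greatest rayleigh_quotients_zero_lower_bound[OF fc h ex p]) auto
  finally show ?thesis .
qed

lemma m_fun_dilate:
  assumes fc: "continuous_on UNIV f" and h: "homogeneous_of_degree p f" and ex: "\<exists>s. prim f s > 0"
    and p: "p > 1" and c: "c\<^sup>2 < 1"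
  shows "m_fun p f 0 c = (1 - c\<^sup>2) powr ((3 + 2 / (p + 1)) / 4) * m_fun p f 0 0"
  unfolding m_fun_zero_beta rayleigh_quotients_dilate[OF c]
  using rayleigh_quotients_nonempty[OF fc h _ p] ex rayleigh_quotients_zero_bdd_below[OF fc h ex p] c
  by (intro continuous_at_Inf_mono[symmetric]) (auto intro!: monoI continuous_intros mult_left_mono)

lemma d_fun_dilate:
  assumes fc: "continuous_on UNIV f" and h: "homogeneous_of_degree p f" and ex: "\<exists>s. prim f s > 0"
    and p: "p > 1" and c: "c\<^sup>2 < 1"
  shows "d_fun p f 0 c = (1 - c\<^sup>2) powr ((3 * p + 5) / (4 * (p - 1))) * d_fun p f 0 0"
proof -
  define a where "a = 1 - c\<^sup>2"
  have "a > 0" "m_fun p f 0 0 > 0"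
    using c m_fun_zero_pos[OF fc h ex p] unfolding a_def by simp_all
  have e: "(3 + 2 / (p + 1)) / 4 * ((p + 1) / (p - 1)) = (3 * p + 5) / (4 * (p - 1))"
    using p mult_strict_mono[OF p p] by (simp add: field_simps)
  have "(a powr ((3 + 2 / (p + 1)) / 4) * m_fun p f 0 0) powr ((p + 1) / (p - 1))
      = a powr ((3 * p + 5) / (4 * (p - 1))) * m_fun p f 0 0 powr ((p + 1) / (p - 1))"
    using \<open>a > 0\<close> \<open>m_fun p f 0 0 > 0\<close>
    by (simp only: powr_mult powr_powr e less_imp_le powr_ge_zero)
  then show ?thesis
    unfolding d_fun_def m_fun_dilate[OF fc h ex p c] a_def[symmetric] by simp
qed

lemma has_real_derivative_one_minus_square_powr:
  fixes y :: real
  assumes "y\<^sup>2 < 1"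
  shows "((\<lambda>y. (1 - y\<^sup>2) powr k) has_real_derivative -2 * k * y * (1 - y\<^sup>2) powr (k - 1)) (at y)"
  using DERIV_fun_powr[of "\<lambda>y. 1 - y\<^sup>2" "-2 * y" y k] assms
  by (auto intro!: derivative_eq_intros simp: algebra_simps)

lemma deriv2_one_minus_square_powr:
  fixes d :: "real \<Rightarrow> real"
  assumes d: "\<And>y. y\<^sup>2 < 1 \<Longrightarrow> d y = D * (1 - y\<^sup>2) powr k" and c: "c\<^sup>2 < 1"
  shows "deriv (deriv d) c = -2 * D * k * (1 - c\<^sup>2) powr (k - 2) * (1 - (2 * k - 1) * c\<^sup>2)"
proof -
  define d' where "d' y = -2 * D * k * (y * (1 - y\<^sup>2) powr (k - 1))" for y
  have near: "\<forall>\<^sub>F y in nhds x. y\<^sup>2 < 1" if "x\<^sup>2 < 1" for x :: real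
    using eventually_nhds_in_open[of "{-1<..<1}" x] that
    by (auto simp: abs_square_less_1 abs_less_iff elim!: eventually_mono)
  have "deriv d y = d' y" if "y\<^sup>2 < 1" for y
  proof -
    have "deriv d y = deriv (\<lambda>y. D * (1 - y\<^sup>2) powr k) y"
      using near[OF that] d by (intro deriv_cong_ev) (auto elim!: eventually_mono)
    also have "\<dots> = d' y"
      unfolding d'_def using DERIV_cmult[OF has_real_derivative_one_minus_square_powr[OF that, of k], of D]
      by (intro DERIV_imp_deriv) (simp add: algebra_simps)
    finally show ?thesis .
  qed
  then have "deriv (deriv d) c = deriv d' c"
    using near[OF c] by (intro deriv_cong_ev) (auto elim!: eventually_mono)
  also have "\<dots> = -2 * D * k * ((1 - c\<^sup>2) powr (k - 1) + c * (-2 * (k - 1) * c * (1 - c\<^sup>2) powr (k - 2)))"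
    unfolding d'_def
    using has_real_derivative_one_minus_square_powr[OF c, of "k - 1"] c
    by (intro DERIV_imp_deriv) (auto intro!: derivative_eq_intros simp: algebra_simps)
  also have "(1 - c\<^sup>2) powr (k - 1) = (1 - c\<^sup>2) powr (k - 2) * (1 - c\<^sup>2)"
  proof -
    have "(1 - c\<^sup>2) powr (k - 1) = (1 - c\<^sup>2) powr (k - 2) * (1 - c\<^sup>2) powr 1"
      unfolding powr_add[symmetric] by simp
    then show ?thesis using c by simp
  qed
  finally show ?thesis
    by (simp add: algebra_simps power2_eq_square)
qed

lemma d_fun_zero_pos:
  assumes "continuous_on UNIV f" "homogeneous_of_degree p f" "\<exists>s. prim f s > 0" "p > 1"
  shows "d_fun p f 0 0 > 0"
  using m_fun_zero_pos[OF assms] \<open>p > 1\<close> unfolding d_fun_def by simp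

lemma sgn_deriv2_d_fun:
  assumes fc: "continuous_on UNIV f" and h: "homogeneous_of_degree p f" and ex: "\<exists>s. prim f s > 0"
    and p: "p > 1" and c: "c\<^sup>2 < 1"
  shows "sgn (deriv (deriv (d_fun p f 0)) c) = sgn (c\<^sup>2 - 2 * (p - 1) / (p + 7))"
proof -
  define k where "k = (3 * p + 5) / (4 * (p - 1))"
  define D where "D = d_fun p f 0 0"
  define T where "T = 2 * (p - 1) / (p + 7)"
  have "k > 0" "D > 0" "T > 0"
    using p d_fun_zero_pos[OF fc h ex p] unfolding k_def D_def T_def by simp_all
  have "2 * k - 1 = 1 / T"
    unfolding k_def T_def using p by (simp add: field_simps)
  have "deriv (deriv (d_fun p f 0)) c = -2 * D * k * (1 - c\<^sup>2) powr (k - 2) * (1 - (2 * k - 1) * c\<^sup>2)"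
  proof (rule deriv2_one_minus_square_powr[OF _ c])
    fix y :: real assume "y\<^sup>2 < 1"
    then show "d_fun p f 0 y = D * (1 - y\<^sup>2) powr k"
      using d_fun_dilate[OF fc h ex p] unfolding k_def D_def by (simp only: mult.commute)
  qed
  also have "1 - (2 * k - 1) * c\<^sup>2 = - ((c\<^sup>2 - T) / T)"
    unfolding \<open>2 * k - 1 = 1 / T\<close> using \<open>T > 0\<close> by (simp add: field_simps)
  finally show ?thesis
    using \<open>k > 0\<close> \<open>D > 0\<close> \<open>T > 0\<close> c unfolding T_def[symmetric] by (simp add: sgn_mult)
qed

theorem mainTheorem18:
  fixes f :: "real \<Rightarrow> real" and p :: real
  assumes "C2_fun f"
    and "homogeneous_of_degree p f"
    and "\<exists>s. prim f s > 0"
    and "p > 1"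
  shows "(\<forall>c. c\<^sup>2 < 1 \<longrightarrow>
            d_fun p f 0 c = (1 - c\<^sup>2) powr ((3 * p + 5) / (4 * (p - 1))) * d_fun p f 0 0)
       \<and> (p \<ge> 9 \<longrightarrow> (\<forall>c. c\<^sup>2 < 1 \<longrightarrow> deriv (deriv (\<lambda>c. d_fun p f 0 c)) c < 0))
       \<and> (p < 9 \<longrightarrow>
            (\<forall>c. c\<^sup>2 < 2 * (p - 1) / (p + 7) \<longrightarrow> deriv (deriv (\<lambda>c. d_fun p f 0 c)) c < 0) \<and>
            (\<forall>c. 2 * (p - 1) / (p + 7) < c\<^sup>2 \<and> c\<^sup>2 < 1 \<longrightarrow> deriv (deriv (\<lambda>c. d_fun p f 0 c)) c > 0))"
proof -
  note hyps = C2_fun_continuous[OF assms(1)] assms(2-4)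
  have neg: "deriv (deriv (d_fun p f 0)) c < 0" if "c\<^sup>2 < 1" "c\<^sup>2 < 2 * (p - 1) / (p + 7)" for c
    using sgn_deriv2_d_fun[OF hyps that(1)] that(2) by (simp add: sgn_if split: if_splits)
  have pos: "deriv (deriv (d_fun p f 0)) c > 0" if "c\<^sup>2 < 1" "2 * (p - 1) / (p + 7) < c\<^sup>2" for c
    using sgn_deriv2_d_fun[OF hyps that(1)] that(2) by (simp add: sgn_if split: if_splits)
  have nine: "1 \<le> 2 * (p - 1) / (p + 7) \<longleftrightarrow> 9 \<le> p"
    using \<open>p > 1\<close> by (simp add: field_simps)
  show ?thesis
  proof (intro conjI allI impI)
    fix c :: real assume "c\<^sup>2 < 1"
    then show "d_fun p f 0 c = (1 - c\<^sup>2) powr ((3 * p + 5) / (4 * (p - 1))) * d_fun p f 0 0"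
      by (rule d_fun_dilate[OF hyps])
  next
    fix c :: real assume "9 \<le> p" "c\<^sup>2 < 1"
    then have "c\<^sup>2 < 2 * (p - 1) / (p + 7)" using nine by linarith
    with \<open>c\<^sup>2 < 1\<close> show "deriv (deriv (d_fun p f 0)) c < 0" by (rule neg)
  next
    fix c :: real assume "p < 9" "c\<^sup>2 < 2 * (p - 1) / (p + 7)"
    then have "c\<^sup>2 < 1" using nine by linarith
    then show "deriv (deriv (d_fun p f 0)) c < 0" using \<open>c\<^sup>2 < 2 * (p - 1) / (p + 7)\<close> by (rule neg)
  qed (use pos in auto)
qed

end
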